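(* For $a\in\mathbb{R}$, let $\mathfrak{g}_{a,1}$ be the $8$-dimensional real Lie algebra with a basis $\{e^1,\dots,e^8\}$ of its dual $\mathfrak{g}_{a,1}^*$ satisfying $$de^1=de^2=de^3=0,\quad de^4=e^{13},\quad de^5=e^{23},\quad de^6=3e^{14}+e^{25}-2e^{35},$$ $$de^7=2a\,e^{12}+e^{15}+e^{24}+2e^{34},\quad de^8=-2e^{14}+e^{16}-2e^{25}+e^{27}-2e^{45}.$$ Then the Lie algebras $\mathfrak{g}_{a,1}$, $a\in[0,\infty)$, are nilpotent, pairwise non-isomorphic, and each of them admits a complex structure.
   Context: Here $e^{ij}=e^i\wedge e^j$, and $d$ is the Chevalley–Eilenberg differential on $\bigwedge\mathfrak{g}^*$, determined by $d\alpha(X,Y)=-\alpha([X,Y])$ for $\alpha\in\mathfrak{g}^*$; the equations above define the Lie bracket. A complex structure on a real Lie algebra $\mathfrak{g}$ is an endomorphism $J:\mathfrak{g}\to\mathfrak{g}$ with $J^2=-\mathrm{Id}$ and vanishing Nijenhuis tensor $N_J(X,Y)=[X,Y]+J[JX,Y]+J[X,JY]-[JX,JY]=0$ for all $X,Y\in\mathfrak{g}$. *)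

theory Defs
  imports "HOL-Analysis.Analysis"
begin

text \<open>The Lie algebra g_{a,1} is modelled on real^8. Basis index k in {1..8}
  corresponds to the element (k-1) of the numeral type 8.\<close>

definition ix :: "nat \<Rightarrow> 8" where
  "ix k = of_nat (k - 1)"

definition ecov :: "nat \<Rightarrow> real^8 \<Rightarrow> real" where
  "ecov k x = x $ ix k"

definition evec :: "nat \<Rightarrow> real^8" where
  "evec k = axis (ix k) 1"

text \<open>cf a k i j = coefficient of e^{ij} (i<j) in d e^k for g_{a,1}.\<close>
definition cf :: "real \<Rightarrow> nat \<Rightarrow> nat \<Rightarrow> nat \<Rightarrow> real" where
  "cf a k i j =
    (if (k,i,j) = (4,1,3) then 1
     else if (k,i,j) = (5,2,3) then 1
     else if (k,i,j) = (6,1,4) then 3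
     else if (k,i,j) = (6,2,5) then 1
     else if (k,i,j) = (6,3,5) then -2
     else if (k,i,j) = (7,1,2) then 2 * a
     else if (k,i,j) = (7,1,5) then 1
     else if (k,i,j) = (7,2,4) then 1
     else if (k,i,j) = (7,3,4) then 2
     else if (k,i,j) = (8,1,4) then -2
     else if (k,i,j) = (8,1,6) then 1
     else if (k,i,j) = (8,2,5) then -2
     else if (k,i,j) = (8,2,7) then 1
     else if (k,i,j) = (8,4,5) then -2
     else 0)"

definition de :: "real \<Rightarrow> nat \<Rightarrow> real^8 \<Rightarrow> real^8 \<Rightarrow> real" where
  "de a k X Y = (\<Sum>i\<in>{1..8}. \<Sum>j\<in>{1..8}. if i < j then
       cf a k i j * (ecov i X * ecov j Y - ecov i Y * ecov j X) else 0)"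

text \<open>The Lie bracket determined by d alpha(X,Y) = - alpha([X,Y]).\<close>
definition br :: "real \<Rightarrow> real^8 \<Rightarrow> real^8 \<Rightarrow> real^8" where
  "br a X Y = (\<Sum>k\<in>{1..8}. (- de a k X Y) *\<^sub>R evec k)"

fun lcs :: "('v::real_vector \<Rightarrow> 'v \<Rightarrow> 'v) \<Rightarrow> nat \<Rightarrow> 'v set" where
  "lcs B 0 = UNIV"
| "lcs B (Suc n) = span {B x y | x y. y \<in> lcs B n}"

definition nilpotent_lie :: "('v::real_vector \<Rightarrow> 'v \<Rightarrow> 'v) \<Rightarrow> bool" where
  "nilpotent_lie B \<longleftrightarrow> (\<exists>n. lcs B n = {0})"

definition lie_isomorphic :: "('v::real_vector \<Rightarrow> 'v \<Rightarrow> 'v) \<Rightarrow> ('w::real_vector \<Rightarrow> 'w \<Rightarrow> 'w) \<Rightarrow> bool" where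
  "lie_isomorphic B C \<longleftrightarrow> (\<exists>f. linear f \<and> bij f \<and> (\<forall>x y. f (B x y) = C (f x) (f y)))"

definition nijenhuis :: "('v::real_vector \<Rightarrow> 'v \<Rightarrow> 'v) \<Rightarrow> ('v \<Rightarrow> 'v) \<Rightarrow> 'v \<Rightarrow> 'v \<Rightarrow> 'v" where
  "nijenhuis B J X Y = B X Y + J (B (J X) Y) + J (B X (J Y)) - B (J X) (J Y)"

definition complex_structure :: "('v::real_vector \<Rightarrow> 'v \<Rightarrow> 'v) \<Rightarrow> ('v \<Rightarrow> 'v) \<Rightarrow> bool" where
  "complex_structure B J \<longleftrightarrow> linear J \<and> (\<forall>x. J (J x) = - x) \<and> (\<forall>X Y. nijenhuis B J X Y = 0)"

end

theory Submission
  imports Defs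
begin

(* Nilpotency: the lower central series of g_a lies in the coordinate filtration cut out by
   e^1..e^3, e^1..e^5, e^1..e^7, and its fourth term is zero.

   Non-isomorphism: an isomorphism f : g_a -> g_b preserves the lower central series, so its
   matrix M in the basis (e_k) is block lower triangular.  Comparing components of
   f [e_i, e_j] = [f e_i, f e_j] then forces M_11 = 1, M_33 = +-1 and b = a M_33, so a = b
   whenever a, b >= 0.

   Complex structure: J e_1 = e_2, J e_3 = e_8, J e_4 = e_5, J e_6 = e_7 is integrable. *)

(* Keeps the basis index 1 a numeral, so that the coordinate rules stated for e_1 and e^1 still
   match after simplification. *)
declare One_nat_def [simp del]

lemma exhaust_8:
  fixes x :: 8
  shows "x = 0 \<or> x = 1 \<or> x = 2 \<or> x = 3 \<or> x = 4 \<or> x = 5 \<or> x = 6 \<or> x = 7"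
proof (induct x)
  case (of_int z)
  then have "z = 0 \<or> z = 1 \<or> z = 2 \<or> z = 3 \<or> z = 4 \<or> z = 5 \<or> z = 6 \<or> z = 7" by fastforce
  then show ?case by auto
qed

lemma sum_1_8: "(\<Sum>i\<in>{1..8::nat}. g i) = g 1 + g 2 + g 3 + g 4 + g 5 + g 6 + g 7 + g 8"
  by (simp add: numeral_eq_Suc sum.atLeast_Suc_atMost add.assoc One_nat_def)

lemma ix_eq_iff: "1 \<le> k \<Longrightarrow> k \<le> 8 \<Longrightarrow> 1 \<le> j \<Longrightarrow> j \<le> 8 \<Longrightarrow> ix k = ix j \<longleftrightarrow> k = j"
  unfolding ix_def by (auto simp: numeral_eq_Suc le_Suc_eq)

lemma vec8_eqI:
  assumes "ecov 1 v = ecov 1 w" "ecov 2 v = ecov 2 w" "ecov 3 v = ecov 3 w" "ecov 4 v = ecov 4 w"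
    "ecov 5 v = ecov 5 w" "ecov 6 v = ecov 6 w" "ecov 7 v = ecov 7 w" "ecov 8 v = ecov 8 w"
  shows "v = w"
  unfolding vec_eq_iff
proof
  fix i :: 8
  have "i = ix 1 \<or> i = ix 2 \<or> i = ix 3 \<or> i = ix 4 \<or> i = ix 5 \<or> i = ix 6 \<or> i = ix 7 \<or> i = ix 8"
    using exhaust_8[of i] by (simp add: ix_def)
  then show "v $ i = w $ i"
    using assms by (auto simp: ecov_def)
qed

lemma ecov_simps [simp]:
  "ecov k (x + y) = ecov k x + ecov k y"
  "ecov k (x - y) = ecov k x - ecov k y"
  "ecov k (- x) = - ecov k x"
  "ecov k (c *\<^sub>R x) = c * ecov k x"
  "ecov k 0 = 0"
  "ecov k (sum g A) = (\<Sum>i\<in>A. ecov k (g i))"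
  by (simp_all add: ecov_def)

lemma ecov_evec: "ecov k (evec j) = (if ix k = ix j then 1 else 0)"
  by (simp add: ecov_def evec_def axis_def)

lemma ecov_br:
  assumes "r \<in> {1..8}"
  shows "ecov r (br a X Y) = - de a r X Y"
proof -
  have "ecov r (br a X Y) = (\<Sum>k\<in>{1..8}. if k = r then - de a k X Y else 0)"
    unfolding br_def ecov_simps by (rule sum.cong) (use assms ix_eq_iff in \<open>auto simp: ecov_evec\<close>)
  then show ?thesis
    using assms by simp
qed

lemma de_expand:
  "de a 1 X Y = 0"
  "de a 2 X Y = 0"
  "de a 3 X Y = 0"
  "de a 4 X Y = ecov 1 X * ecov 3 Y - ecov 1 Y * ecov 3 X"
  "de a 5 X Y = ecov 2 X * ecov 3 Y - ecov 2 Y * ecov 3 X"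
  "de a 6 X Y = 3 * (ecov 1 X * ecov 4 Y - ecov 1 Y * ecov 4 X)
     + (ecov 2 X * ecov 5 Y - ecov 2 Y * ecov 5 X) - 2 * (ecov 3 X * ecov 5 Y - ecov 3 Y * ecov 5 X)"
  "de a 7 X Y = 2 * a * (ecov 1 X * ecov 2 Y - ecov 1 Y * ecov 2 X)
     + (ecov 1 X * ecov 5 Y - ecov 1 Y * ecov 5 X) + (ecov 2 X * ecov 4 Y - ecov 2 Y * ecov 4 X)
     + 2 * (ecov 3 X * ecov 4 Y - ecov 3 Y * ecov 4 X)"
  "de a 8 X Y = -2 * (ecov 1 X * ecov 4 Y - ecov 1 Y * ecov 4 X)
     + (ecov 1 X * ecov 6 Y - ecov 1 Y * ecov 6 X) - 2 * (ecov 2 X * ecov 5 Y - ecov 2 Y * ecov 5 X)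
     + (ecov 2 X * ecov 7 Y - ecov 2 Y * ecov 7 X) - 2 * (ecov 4 X * ecov 5 Y - ecov 4 Y * ecov 5 X)"
  unfolding de_def sum_1_8 by (simp_all add: cf_def)

lemmas br_coords = ecov_br[of 1] ecov_br[of 2] ecov_br[of 3] ecov_br[of 4]
  ecov_br[of 5] ecov_br[of 6] ecov_br[of 7] ecov_br[of 8]

section \<open>Nilpotency\<close>

definition coords_vanish :: "nat set \<Rightarrow> (real^8) set" where
  "coords_vanish I = {x. \<forall>k\<in>I. ecov k x = 0}"

lemma subspace_coords_vanish: "subspace (coords_vanish I)"
  by (auto simp: subspace_def coords_vanish_def)

lemma coords_vanish_all: "coords_vanish {1,2,3,4,5,6,7,8} = {0}"
  using vec8_eqI[of _ 0] by (auto simp: coords_vanish_def le_Suc_eq numeral_eq_Suc)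

lemma lcs_Suc_subset:
  assumes "lcs B n \<subseteq> V" and "subspace W" and "\<And>x y. y \<in> V \<Longrightarrow> B x y \<in> W"
  shows "lcs B (Suc n) \<subseteq> W"
  unfolding lcs.simps using assms by (intro span_minimal) auto

lemma zero_in_lcs: "0 \<in> lcs B n"
  by (cases n) (simp_all add: span_zero)

lemma lcs_br_1: "lcs (br a) 1 \<subseteq> coords_vanish {1,2,3}"
proof -
  have "lcs (br a) (Suc 0) \<subseteq> coords_vanish {1,2,3}"
    by (rule lcs_Suc_subset[OF _ subspace_coords_vanish, of _ _ UNIV])
      (auto simp: coords_vanish_def br_coords de_expand)
  then show ?thesis by (simp add: One_nat_def)
qed

lemma lcs_br_2: "lcs (br a) 2 \<subseteq> coords_vanish {1,2,3,4,5}"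
proof -
  have "lcs (br a) (Suc 1) \<subseteq> coords_vanish {1,2,3,4,5}"
    by (rule lcs_Suc_subset[OF lcs_br_1 subspace_coords_vanish])
      (auto simp: coords_vanish_def br_coords de_expand)
  then show ?thesis by simp
qed

lemma lcs_br_3: "lcs (br a) 3 \<subseteq> coords_vanish {1,2,3,4,5,6,7}"
proof -
  have "lcs (br a) (Suc 2) \<subseteq> coords_vanish {1,2,3,4,5,6,7}"
    by (rule lcs_Suc_subset[OF lcs_br_2 subspace_coords_vanish])
      (auto simp: coords_vanish_def br_coords de_expand)
  then show ?thesis by simp
qed

lemma lcs_br_4: "lcs (br a) 4 = {0}"
proof -
  have "lcs (br a) (Suc 3) \<subseteq> coords_vanish {1,2,3,4,5,6,7,8}"
    by (rule lcs_Suc_subset[OF lcs_br_3 subspace_coords_vanish])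
      (auto simp: coords_vanish_def br_coords de_expand)
  then show ?thesis
    using coords_vanish_all zero_in_lcs[of "br a" 4] by auto
qed

lemma nilpotent_br: "nilpotent_lie (br a)"
  using lcs_br_4 unfolding nilpotent_lie_def by blast

section \<open>Isomorphisms between the algebras\<close>

lemma image_lcs_subset:
  assumes "linear f" and "\<And>x y. f (A x y) = B (f x) (f y)"
  shows "f ` lcs A n \<subseteq> lcs B n"
proof (induction n)
  case 0
  show ?case by simp
next
  case (Suc n)
  have "f ` lcs A (Suc n) = span (f ` {A x y | x y. y \<in> lcs A n})"
    by (simp add: linear_span_image[OF assms(1)])
  also have "\<dots> \<subseteq> lcs B (Suc n)"
    unfolding lcs.simps using Suc.IH assms(2) by (intro span_mono) blast
  finally show ?case .
qed

lemma bracket_in_lcs: "y \<in> lcs B n \<Longrightarrow> c *\<^sub>R B x y \<in> lcs B (Suc n)"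
  by (auto intro: span_scale span_base)

lemma evec_in_lcs_br:
  "evec 4 \<in> lcs (br a) 1" "evec 5 \<in> lcs (br a) 1"
  "evec 6 \<in> lcs (br a) 2" "evec 7 \<in> lcs (br a) 2" "evec 8 \<in> lcs (br a) 3"
proof -
  have br_evec: "evec 4 = 1 *\<^sub>R br a (evec 3) (evec 1)" "evec 5 = 1 *\<^sub>R br a (evec 3) (evec 2)"
    "evec 6 = (1/2) *\<^sub>R br a (evec 3) (evec 5)" "evec 7 = (-1) *\<^sub>R br a (evec 1) (evec 5)"
    "evec 8 = (-1) *\<^sub>R br a (evec 1) (evec 6)"
    by (rule vec8_eqI; simp add: br_coords de_expand ecov_evec ix_def)+
  have 1: "evec 4 \<in> lcs (br a) (Suc 0)" "evec 5 \<in> lcs (br a) (Suc 0)"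
    unfolding br_evec(1,2) by (rule bracket_in_lcs, simp)+
  have 2: "evec 6 \<in> lcs (br a) (Suc (Suc 0))" "evec 7 \<in> lcs (br a) (Suc (Suc 0))"
    unfolding br_evec(3,4) by (rule bracket_in_lcs[OF 1(2)])+
  have "evec 8 \<in> lcs (br a) (Suc (Suc (Suc 0)))"
    unfolding br_evec(5) by (rule bracket_in_lcs[OF 2(1)])
  with 1 2 show "evec 4 \<in> lcs (br a) 1" "evec 5 \<in> lcs (br a) 1"
    "evec 6 \<in> lcs (br a) 2" "evec 7 \<in> lcs (br a) 2" "evec 8 \<in> lcs (br a) 3"
    by (simp_all add: One_nat_def numeral_2_eq_2 numeral_3_eq_3)
qed

locale br_isomorphism =
  fixes a b :: real and f :: "real^8 \<Rightarrow> real^8"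
  assumes linear_f: "linear f" and inj_f: "inj f"
    and hom: "\<And>x y. f (br a x y) = br b (f x) (f y)"
begin

definition M :: "nat \<Rightarrow> nat \<Rightarrow> real" where
  "M p q = ecov p (f (evec q))"

lemma M_block_lower_triangular:
  "p \<in> {1,2,3} \<Longrightarrow> M p 4 = 0" "p \<in> {1,2,3} \<Longrightarrow> M p 5 = 0"
  "p \<in> {1,2,3,4,5} \<Longrightarrow> M p 6 = 0" "p \<in> {1,2,3,4,5} \<Longrightarrow> M p 7 = 0"
  "p \<in> {1,2,3,4,5,6,7} \<Longrightarrow> M p 8 = 0"
proof -
  have img: "f x \<in> lcs (br b) n" if "x \<in> lcs (br a) n" for x n
    using image_lcs_subset[OF linear_f, of "br a" "br b"] hom that by blast
  have "f (evec 4) \<in> coords_vanish {1,2,3}" "f (evec 5) \<in> coords_vanish {1,2,3}"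
    "f (evec 6) \<in> coords_vanish {1,2,3,4,5}" "f (evec 7) \<in> coords_vanish {1,2,3,4,5}"
    "f (evec 8) \<in> coords_vanish {1,2,3,4,5,6,7}"
    using img[OF evec_in_lcs_br(1)] img[OF evec_in_lcs_br(2)] img[OF evec_in_lcs_br(3)]
      img[OF evec_in_lcs_br(4)] img[OF evec_in_lcs_br(5)] lcs_br_1 lcs_br_2 lcs_br_3
    by blast+
  then show "p \<in> {1,2,3} \<Longrightarrow> M p 4 = 0" "p \<in> {1,2,3} \<Longrightarrow> M p 5 = 0"
    "p \<in> {1,2,3,4,5} \<Longrightarrow> M p 6 = 0" "p \<in> {1,2,3,4,5} \<Longrightarrow> M p 7 = 0"
    "p \<in> {1,2,3,4,5,6,7} \<Longrightarrow> M p 8 = 0"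
    by (auto simp: M_def coords_vanish_def)
qed

lemma M_88_nonzero: "M 8 8 \<noteq> 0"
proof
  assume "M 8 8 = 0"
  then have "f (evec 8) = f 0"
    by (intro vec8_eqI) (simp_all add: linear_0[OF linear_f] M_block_lower_triangular flip: M_def)
  then have "evec 8 = 0"
    using inj_f unfolding inj_def by blast
  then show False
    using ecov_evec[of 8 8] by simp
qed

lemma ecov_f_evec: "ecov p (f (evec q)) = M p q"
  by (simp add: M_def)

lemmas structure_simps = sum_1_8 de_expand ecov_evec ix_def ecov_f_evec M_block_lower_triangular

(* The instance [of r i j] is the e^r-component of f [e_i, e_j] = [f e_i, f e_j]. *)
lemma structure_eq:
  assumes "r \<in> {1..8}"
  shows "(\<Sum>k\<in>{1..8}. de a k (evec i) (evec j) * M r k) = de b r (f (evec i)) (f (evec j))"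
proof -
  have "- de b r (f (evec i)) (f (evec j)) = ecov r (br b (f (evec i)) (f (evec j)))"
    using ecov_br[OF assms] by simp
  also have "\<dots> = ecov r (f (br a (evec i) (evec j)))"
    by (simp add: hom)
  also have "\<dots> = - (\<Sum>k\<in>{1..8}. de a k (evec i) (evec j) * M r k)"
    unfolding br_def
    by (simp add: linear_sum[OF linear_f] linear_scale[OF linear_f] linear_neg[OF linear_f]
        M_def sum_negf)
  finally show ?thesis by simp
qed

lemma block_dets_nonzero:
  "M 1 1 * M 2 2 - M 1 2 * M 2 1 \<noteq> 0" "M 6 6 * M 7 7 - M 6 7 * M 7 6 \<noteq> 0"
proof -
  have "M 1 1 * M 6 6 + M 2 1 * M 7 6 = M 8 8"
    using structure_eq[of 8 1 6] by (simp add: structure_simps algebra_simps)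
  moreover have "M 1 1 * M 6 7 + M 2 1 * M 7 7 = 0"
    using structure_eq[of 8 1 7] by (simp add: structure_simps algebra_simps)
  moreover have "M 1 2 * M 6 6 + M 2 2 * M 7 6 = 0"
    using structure_eq[of 8 2 6] by (simp add: structure_simps algebra_simps)
  moreover have "M 1 2 * M 6 7 + M 2 2 * M 7 7 = M 8 8"
    using structure_eq[of 8 2 7] by (simp add: structure_simps algebra_simps)
  moreover have "(M 1 1 * M 2 2 - M 1 2 * M 2 1) * (M 6 6 * M 7 7 - M 6 7 * M 7 6)
      = (M 1 1 * M 6 6 + M 2 1 * M 7 6) * (M 1 2 * M 6 7 + M 2 2 * M 7 7)
        - (M 1 1 * M 6 7 + M 2 1 * M 7 7) * (M 1 2 * M 6 6 + M 2 2 * M 7 6)"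
    by (simp add: algebra_simps)
  ultimately have "(M 1 1 * M 2 2 - M 1 2 * M 2 1) * (M 6 6 * M 7 7 - M 6 7 * M 7 6) = M 8 8 ^ 2"
    by (simp add: power2_eq_square)
  then show "M 1 1 * M 2 2 - M 1 2 * M 2 1 \<noteq> 0" "M 6 6 * M 7 7 - M 6 7 * M 7 6 \<noteq> 0"
    using M_88_nonzero by auto
qed

lemma M_third_column_zero: "M 1 3 = 0" "M 2 3 = 0"
proof -
  have "M 1 3 * M 6 6 + M 2 3 * M 7 6 = 0"
    using structure_eq[of 8 3 6] by (simp add: structure_simps algebra_simps)
  moreover have "M 1 3 * M 6 7 + M 2 3 * M 7 7 = 0"
    using structure_eq[of 8 3 7] by (simp add: structure_simps algebra_simps)
  ultimately have "M 1 3 * (M 6 6 * M 7 7 - M 6 7 * M 7 6) = 0"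
    "M 2 3 * (M 6 6 * M 7 7 - M 6 7 * M 7 6) = 0"
    by algebra+
  then show "M 1 3 = 0" "M 2 3 = 0"
    using block_dets_nonzero(2) by simp_all
qed

lemma M_third_row_zero: "M 3 1 = 0" "M 3 2 = 0"
proof -
  have "M 1 1 * M 3 2 = M 1 2 * M 3 1"
    using structure_eq[of 4 1 2] by (simp add: structure_simps algebra_simps)
  moreover have "M 2 1 * M 3 2 = M 2 2 * M 3 1"
    using structure_eq[of 5 1 2] by (simp add: structure_simps algebra_simps)
  ultimately have "M 3 1 * (M 1 1 * M 2 2 - M 1 2 * M 2 1) = 0"
    "M 3 2 * (M 1 1 * M 2 2 - M 1 2 * M 2 1) = 0"
    by algebra+
  then show "M 3 1 = 0" "M 3 2 = 0"
    using block_dets_nonzero(1) by simp_all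
qed

lemma M_45_block:
  "M 4 4 = M 1 1 * M 3 3" "M 5 4 = M 2 1 * M 3 3" "M 4 5 = M 1 2 * M 3 3" "M 5 5 = M 2 2 * M 3 3"
  using structure_eq[of 4 1 3] structure_eq[of 5 1 3] structure_eq[of 4 2 3] structure_eq[of 5 2 3]
  by (simp_all add: structure_simps M_third_column_zero algebra_simps)

lemma M_88_eq: "M 8 8 = M 3 3 ^ 2 * (M 1 1 * M 2 2 - M 1 2 * M 2 1)"
proof -
  have "M 8 8 = M 4 4 * M 5 5 - M 4 5 * M 5 4"
    using structure_eq[of 8 4 5] by (simp add: structure_simps algebra_simps)
  then show ?thesis
    unfolding M_45_block by algebra
qed

lemma M_33_nonzero: "M 3 3 \<noteq> 0"
  using M_88_nonzero M_88_eq by auto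

lemma M_67_block:
  "M 6 6 = M 3 3 * M 5 5" "M 6 7 = - M 3 3 * M 5 4" "M 7 6 = - M 3 3 * M 4 5" "M 7 7 = M 3 3 * M 4 4"
  using structure_eq[of 6 3 5] structure_eq[of 6 3 4] structure_eq[of 7 3 5] structure_eq[of 7 3 4]
  by (simp_all add: structure_simps M_third_column_zero algebra_simps)

lemma M_12_block:
  "M 1 2 = 0" "M 2 1 = 0" "M 2 2 = M 3 3" "M 1 1 ^ 2 = M 3 3 ^ 2"
proof -
  note known = M_third_column_zero M_third_row_zero M_45_block M_67_block
  have "M 3 3 * (M 1 2 * (M 3 3 + 2 * M 2 2)) = 0"
    using structure_eq[of 7 2 5] by (simp add: structure_simps known algebra_simps power2_eq_square)
  then have br25_7: "M 1 2 * (M 3 3 + 2 * M 2 2) = 0"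
    using M_33_nonzero by simp
  have "M 3 3 ^ 2 * (M 3 3 * M 2 2 - 3 * M 1 2 ^ 2 - M 2 2 ^ 2) = 0"
    using structure_eq[of 6 2 5] by (simp add: structure_simps known algebra_simps power2_eq_square)
  then have br25_6: "M 3 3 * M 2 2 - 3 * M 1 2 ^ 2 - M 2 2 ^ 2 = 0"
    using M_33_nonzero by simp
  show z12: "M 1 2 = 0"
  proof (rule ccontr)
    assume "M 1 2 \<noteq> 0"
    with br25_7 have "M 3 3 = - 2 * M 2 2"
      by simp
    with br25_6 have "M 1 2 ^ 2 + M 2 2 ^ 2 = 0"
      by algebra
    with \<open>M 1 2 \<noteq> 0\<close> show False
      by simp
  qed
  then have "M 1 1 \<noteq> 0" "M 2 2 \<noteq> 0"
    using block_dets_nonzero(1) by auto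
  have "M 3 3 * (M 1 1 * M 2 1) = 0"
    using structure_eq[of 7 1 4] z12 by (simp add: structure_simps known algebra_simps power2_eq_square)
  then show z21: "M 2 1 = 0"
    using M_33_nonzero \<open>M 1 1 \<noteq> 0\<close> by simp
  have "M 2 2 * (M 3 3 - M 2 2) = 0"
    using br25_6 z12 by (simp add: power2_eq_square algebra_simps)
  then show z22: "M 2 2 = M 3 3"
    using \<open>M 2 2 \<noteq> 0\<close> by simp
  have "M 3 3 * (M 3 3 ^ 2 - M 1 1 ^ 2) = 0"
    using structure_eq[of 6 1 4] z21 z22 by (simp add: structure_simps known algebra_simps power2_eq_square)
  then show "M 1 1 ^ 2 = M 3 3 ^ 2"
    using M_33_nonzero by simp
qed

lemma M_blocks_closed_form:
  "M 4 4 = M 1 1 * M 3 3" "M 5 4 = 0" "M 4 5 = 0" "M 5 5 = M 3 3 ^ 2" "M 6 6 = M 3 3 ^ 3"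
  "M 6 7 = 0" "M 7 6 = 0" "M 7 7 = M 1 1 * M 3 3 ^ 2" "M 8 8 = M 1 1 * M 3 3 ^ 3"
  by (simp_all add: M_45_block M_67_block M_88_eq M_12_block(1-3)
    power2_eq_square power3_eq_cube)

lemmas M_known = M_blocks_closed_form M_third_column_zero M_third_row_zero M_12_block(1-3)

lemma M_52_relation: "M 1 1 * M 5 2 = M 3 3 * M 4 1"
proof -
  have "M 8 7 + 2 * M 4 1 * M 3 3 ^ 2 = M 1 1 * M 6 5"
    using structure_eq[of 8 1 5] by (simp add: structure_simps M_known algebra_simps)
  moreover have "M 6 5 = M 3 3 * M 5 3 + 2 * M 3 3 * M 5 2"
    using structure_eq[of 6 2 3] by (simp add: structure_simps M_known algebra_simps)
  moreover have "M 8 7 = M 1 1 * M 3 3 * M 5 3"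
    using structure_eq[of 8 3 4] by (simp add: structure_simps M_known algebra_simps)
  ultimately have "2 * M 3 3 * (M 3 3 * M 4 1 - M 1 1 * M 5 2) = 0"
    by algebra
  then show ?thesis
    using M_33_nonzero by simp
qed

lemma M_42_relation: "2 * M 4 2 = (M 1 1 - 1) * M 3 3"
proof -
  have "M 8 6 + 2 * M 3 3 ^ 3 + 2 * M 4 2 * M 3 3 ^ 2 = M 3 3 * M 7 5 + 2 * M 1 1 * M 3 3 ^ 3"
    using structure_eq[of 8 2 5]
    by (simp add: structure_simps M_known algebra_simps power2_eq_square power3_eq_cube)
  moreover have "M 7 5 + 2 * M 3 3 * M 4 2 = M 3 3 * M 4 3"
    using structure_eq[of 7 2 3] by (simp add: structure_simps M_known algebra_simps)
  moreover have "M 8 6 = M 4 3 * M 3 3 ^ 2"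
    using structure_eq[of 8 3 5] by (simp add: structure_simps M_known algebra_simps)
  ultimately have "2 * M 3 3 ^ 2 * (M 3 3 + 2 * M 4 2 - M 1 1 * M 3 3) = 0"
    by algebra
  then have "M 3 3 + 2 * M 4 2 - M 1 1 * M 3 3 = 0"
    using M_33_nonzero by simp
  then show ?thesis
    by algebra
qed

lemma M_51_relation: "M 3 3 ^ 2 = 2 * M 1 1 * M 5 1 + M 1 1 * M 3 3 ^ 2"
proof -
  have "3 * M 8 6 + 2 * M 1 1 ^ 2 * M 3 3
      = M 1 1 * M 6 4 + 2 * M 1 1 * M 3 3 ^ 3 + 2 * M 1 1 * M 5 1 * M 3 3"
    using structure_eq[of 8 1 4] by (simp add: structure_simps M_known algebra_simps power2_eq_square)
  moreover have "M 6 4 = 3 * M 1 1 * M 4 3 + 2 * M 5 1 * M 3 3"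
    using structure_eq[of 6 1 3] by (simp add: structure_simps M_known algebra_simps)
  moreover have "M 8 6 = M 4 3 * M 3 3 ^ 2"
    using structure_eq[of 8 3 5] by (simp add: structure_simps M_known algebra_simps)
  ultimately have "2 * M 3 3 * (M 3 3 ^ 2 - 2 * M 1 1 * M 5 1 - M 1 1 * M 3 3 ^ 2) = 0"
    using M_12_block(4) by algebra
  then show ?thesis
    using M_33_nonzero by simp
qed

lemma M_11_eq_1: "M 1 1 = 1"
proof -
  have "M 5 1 * M 3 3 = 3 * M 1 1 * M 4 2"
    using structure_eq[of 6 1 2] by (simp add: structure_simps M_known algebra_simps)
  then have "4 * M 3 3 ^ 3 * (M 1 1 - 1) = 0"
    using M_51_relation M_42_relation M_12_block(4) by algebra
  then show ?thesis
    using M_33_nonzero by simp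
qed

lemma parameter_relation: "b = a * M 3 3" "M 3 3 ^ 2 = 1"
proof -
  have "M 4 1 * M 3 3 + 2 * a * M 1 1 * M 3 3 ^ 2 = M 1 1 * M 5 2 + 2 * b * M 1 1 * M 3 3"
    using structure_eq[of 7 1 2] by (simp add: structure_simps M_known algebra_simps)
  then have "2 * M 3 3 * (a * M 3 3 - b) = 0"
    using M_52_relation M_11_eq_1 by (simp add: algebra_simps power2_eq_square)
  then show "b = a * M 3 3"
    using M_33_nonzero by simp
  show "M 3 3 ^ 2 = 1"
    using M_12_block(4) M_11_eq_1 by simp
qed

end

lemma isomorphic_br_imp_eq:
  assumes "lie_isomorphic (br a) (br b)" and "a \<ge> 0" and "b \<ge> 0"
  shows "a = b"
proof -
  obtain f where "linear f" "bij f" "\<forall>x y. f (br a x y) = br b (f x) (f y)"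
    using assms(1) unfolding lie_isomorphic_def by blast
  then interpret br_isomorphism a b f
    by (simp add: br_isomorphism_def bij_is_inj)
  have "M 3 3 = 1 \<or> M 3 3 = -1"
    using parameter_relation(2) by (simp add: power2_eq_1_iff)
  then show ?thesis
    using parameter_relation(1) assms(2,3) by auto
qed

section \<open>A complex structure\<close>

definition cplx_J :: "real^8 \<Rightarrow> real^8" where
  "cplx_J x = ecov 1 x *\<^sub>R evec 2 - ecov 2 x *\<^sub>R evec 1 + ecov 4 x *\<^sub>R evec 5 - ecov 5 x *\<^sub>R evec 4
    + ecov 6 x *\<^sub>R evec 7 - ecov 7 x *\<^sub>R evec 6 + ecov 3 x *\<^sub>R evec 8 - ecov 8 x *\<^sub>R evec 3"

lemma cplx_J_coords:
  "ecov 1 (cplx_J x) = - ecov 2 x" "ecov 2 (cplx_J x) = ecov 1 x"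
  "ecov 3 (cplx_J x) = - ecov 8 x" "ecov 8 (cplx_J x) = ecov 3 x"
  "ecov 4 (cplx_J x) = - ecov 5 x" "ecov 5 (cplx_J x) = ecov 4 x"
  "ecov 6 (cplx_J x) = - ecov 7 x" "ecov 7 (cplx_J x) = ecov 6 x"
  by (simp_all add: cplx_J_def ecov_evec ix_def)

lemma complex_structure_cplx_J: "complex_structure (br a) cplx_J"
  unfolding complex_structure_def
proof (intro conjI allI)
  show "linear cplx_J"
    by (rule linearI; rule vec8_eqI) (auto simp: cplx_J_coords)
  show "cplx_J (cplx_J x) = - x" for x
    by (rule vec8_eqI) (auto simp: cplx_J_coords)
  show "nijenhuis (br a) cplx_J X Y = 0" for X Y
    unfolding nijenhuis_def
    by (rule vec8_eqI) (auto simp: cplx_J_coords br_coords de_expand algebra_simps)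
qed

theorem theorem3p2:
  shows "(\<forall>a::real. a \<ge> 0 \<longrightarrow> nilpotent_lie (br a))
       \<and> (\<forall>a b::real. a \<ge> 0 \<longrightarrow> b \<ge> 0 \<longrightarrow> a \<noteq> b \<longrightarrow> \<not> lie_isomorphic (br a) (br b))
       \<and> (\<forall>a::real. a \<ge> 0 \<longrightarrow> (\<exists>J. complex_structure (br a) J))"
  using nilpotent_br isomorphic_br_imp_eq complex_structure_cplx_J by blast

end
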